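(* For any finite graph $G$ and integer $k\ge0$: $\alpha(G)=k$ if and only if $G$ has an extended independent set of order $k$ but no extended independent set of any order larger than $k$.
   Context: Let $G$ be a graph. An extended independent set of order $k$ in $G$ is a set $K$ of $k+r$ vertices, for some integer $0\le r\le k$, such that: (1) the induced subgraph $G[K]$ has no cycles, has exactly $2r$ non-isolated vertices, and the subgraph of $G[K]$ induced on these $2r$ vertices has a perfect matching; and (2) for every vertex $v\notin K$, the set $\mathcal N(v)\cap K$ (where $\mathcal N(v)$ is the neighbourhood of $v$) contains at least two isolated vertices of $G[K]$, or contains at least two vertices of the same connected component of $G[K]$. $\alpha(G)$ is the independence number of $G$. *)

theory Defs
  imports Main
begin

definition fin_graph :: "'a set \<Rightarrow> ('a \<Rightarrow> 'a \<Rightarrow> bool) \<Rightarrow> bool" where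
  "fin_graph V E \<longleftrightarrow> finite V \<and> (\<forall>u v. E u v \<longrightarrow> E v u) \<and> (\<forall>u. \<not> E u u)
     \<and> (\<forall>u v. E u v \<longrightarrow> u \<in> V \<and> v \<in> V)"

definition nbhd :: "('a \<Rightarrow> 'a \<Rightarrow> bool) \<Rightarrow> 'a \<Rightarrow> 'a set" where
  "nbhd E v = {u. E v u}"

definition independent :: "'a set \<Rightarrow> ('a \<Rightarrow> 'a \<Rightarrow> bool) \<Rightarrow> 'a set \<Rightarrow> bool" where
  "independent V E S \<longleftrightarrow> S \<subseteq> V \<and> (\<forall>u\<in>S. \<forall>v\<in>S. \<not> E u v)"

definition indep_number :: "'a set \<Rightarrow> ('a \<Rightarrow> 'a \<Rightarrow> bool) \<Rightarrow> nat" where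
  "indep_number V E = Max {card S | S. independent V E S}"

definition has_cycle_in :: "('a \<Rightarrow> 'a \<Rightarrow> bool) \<Rightarrow> 'a set \<Rightarrow> bool" where
  "has_cycle_in E K \<longleftrightarrow> (\<exists>cs. length cs \<ge> 3 \<and> distinct cs \<and> set cs \<subseteq> K
     \<and> (\<forall>i. Suc i < length cs \<longrightarrow> E (cs ! i) (cs ! Suc i))
     \<and> E (last cs) (hd cs))"

definition isolated_in :: "('a \<Rightarrow> 'a \<Rightarrow> bool) \<Rightarrow> 'a set \<Rightarrow> 'a set" where
  "isolated_in E K = {v \<in> K. \<forall>u\<in>K. \<not> E v u}"

definition nonisolated_in :: "('a \<Rightarrow> 'a \<Rightarrow> bool) \<Rightarrow> 'a set \<Rightarrow> 'a set" where
  "nonisolated_in E K = {v \<in> K. \<exists>u\<in>K. E v u}"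

definition has_perfect_matching :: "('a \<Rightarrow> 'a \<Rightarrow> bool) \<Rightarrow> 'a set \<Rightarrow> bool" where
  "has_perfect_matching E N \<longleftrightarrow> (\<exists>M. (\<forall>e\<in>M. \<exists>u v. e = {u, v} \<and> u \<in> N \<and> v \<in> N \<and> E u v)
     \<and> (\<forall>e\<in>M. \<forall>e'\<in>M. e \<noteq> e' \<longrightarrow> e \<inter> e' = {}) \<and> \<Union>M = N)"

definition same_comp :: "('a \<Rightarrow> 'a \<Rightarrow> bool) \<Rightarrow> 'a set \<Rightarrow> 'a \<Rightarrow> 'a \<Rightarrow> bool" where
  "same_comp E K u w \<longleftrightarrow> u \<in> K \<and> w \<in> K \<and> (\<lambda>x y. x \<in> K \<and> y \<in> K \<and> E x y)\<^sup>*\<^sup>* u w"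

definition ext_indep_set :: "'a set \<Rightarrow> ('a \<Rightarrow> 'a \<Rightarrow> bool) \<Rightarrow> nat \<Rightarrow> 'a set \<Rightarrow> bool" where
  "ext_indep_set V E k K \<longleftrightarrow> K \<subseteq> V \<and> (\<exists>r. r \<le> k \<and> card K = k + r
     \<and> \<not> has_cycle_in E K
     \<and> card (nonisolated_in E K) = 2 * r
     \<and> has_perfect_matching E (nonisolated_in E K)
     \<and> (\<forall>v \<in> V - K.
          (\<exists>a b. a \<noteq> b \<and> a \<in> nbhd E v \<inter> isolated_in E K \<and> b \<in> nbhd E v \<inter> isolated_in E K)
        \<or> (\<exists>a b. a \<noteq> b \<and> a \<in> nbhd E v \<inter> K \<and> b \<in> nbhd E v \<inter> K \<and> same_comp E K a b)))"

end

theory Submission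
  imports Defs
begin

(* A set K satisfying condition (1) consists of k - r isolated vertices and a forest on 2r
   vertices with a perfect matching. Repeatedly deleting a leaf together with its partner shows
   that such a forest has an independent set of size r; the leaf can be chosen outside any set U
   of vertices lying in pairwise different components, because the two ends of a longest path
   are leaves of one component. Hence k <= alpha.
   Conversely, a maximum independent set satisfies (1) with k = alpha and r = 0; take r maximal.
   If a vertex v outside K violated (2), then either v has exactly one isolated neighbour w in K,
   and K + v satisfies (1) with the extra matching edge vw, contradicting the maximality of r;
   or v has no isolated neighbour, and v together with an independent set of size alpha in K
   avoiding the neighbours of v is independent of size alpha + 1. *)

lemma fin_graph_finite: "fin_graph V E \<Longrightarrow> finite V"
  unfolding fin_graph_def by blast

lemma fin_graph_symp: "fin_graph V E \<Longrightarrow> symp E"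
  unfolding fin_graph_def symp_def by blast

lemma fin_graph_irreflp: "fin_graph V E \<Longrightarrow> irreflp E"
  unfolding fin_graph_def irreflp_def by blast

definition is_path_in :: "('a \<Rightarrow> 'a \<Rightarrow> bool) \<Rightarrow> 'a set \<Rightarrow> 'a list \<Rightarrow> bool" where
  "is_path_in E N cs \<longleftrightarrow> distinct cs \<and> set cs \<subseteq> N \<and> successively E cs"

definition is_cycle :: "('a \<Rightarrow> 'a \<Rightarrow> bool) \<Rightarrow> 'a list \<Rightarrow> bool" where
  "is_cycle E cs \<longleftrightarrow> 3 \<le> length cs \<and> distinct cs \<and> successively E cs \<and> E (last cs) (hd cs)"

lemma has_cycle_in_iff: "has_cycle_in E K \<longleftrightarrow> (\<exists>cs. is_cycle E cs \<and> set cs \<subseteq> K)"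
  unfolding has_cycle_in_def is_cycle_def successively_conv_nth by blast

lemma has_cycle_in_mono: "K' \<subseteq> K \<Longrightarrow> has_cycle_in E K' \<Longrightarrow> has_cycle_in E K"
  unfolding has_cycle_in_iff by blast

lemma is_cycle_rotate1: "is_cycle E cs \<Longrightarrow> is_cycle E (rotate1 cs)"
  by (cases cs)
    (auto simp: is_cycle_def successively_append_iff successively_Cons hd_append split: if_splits)

lemma is_cycle_rotate: "is_cycle E cs \<Longrightarrow> is_cycle E (rotate n cs)"
  by (induction n) (simp_all add: is_cycle_rotate1)

lemma distinct_hd_neq_last:
  assumes "distinct xs" "2 \<le> length xs"
  shows "hd xs \<noteq> last xs"
proof -
  obtain a ys where xs: "xs = a # ys" using assms(2) by (cases xs) auto
  moreover have "ys \<noteq> []" using assms(2) xs by (cases ys) auto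
  ultimately have "last xs \<in> set ys" by simp
  then show ?thesis using assms(1) xs by auto
qed

lemma successively_rtranclp_hd_last: "successively R xs \<Longrightarrow> xs \<noteq> [] \<Longrightarrow> R\<^sup>*\<^sup>* (hd xs) (last xs)"
  by (induction R xs rule: successively.induct) (auto intro: converse_rtranclp_into_rtranclp)

lemma same_comp_mono:
  assumes "K' \<subseteq> K" "same_comp E K' a b"
  shows "same_comp E K a b"
proof -
  have "(\<lambda>x y. x \<in> K' \<and> y \<in> K' \<and> E x y)\<^sup>*\<^sup>* \<le> (\<lambda>x y. x \<in> K \<and> y \<in> K \<and> E x y)\<^sup>*\<^sup>*"
    using assms(1) by (intro rtranclp_mono) auto
  then show ?thesis
    using assms unfolding same_comp_def by (auto dest: predicate2D)
qed

lemma is_path_in_same_comp: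
  assumes "is_path_in E N cs" "cs \<noteq> []"
  shows "same_comp E N (hd cs) (last cs)"
proof -
  have "successively E cs" "set cs \<subseteq> N" using assms(1) unfolding is_path_in_def by blast+
  then have "successively (\<lambda>x y. x \<in> N \<and> y \<in> N \<and> E x y) cs"
    by (elim successively_mono) auto
  moreover have "hd cs \<in> N" "last cs \<in> N"
    using assms unfolding is_path_in_def by auto
  ultimately show ?thesis
    unfolding same_comp_def using successively_rtranclp_hd_last assms(2) by blast
qed

lemma is_path_in_rev:
  assumes "symp E" "is_path_in E N cs"
  shows "is_path_in E N (rev cs)"
proof -
  have "successively E cs" using assms(2) unfolding is_path_in_def by blast
  then have "successively (\<lambda>x y. E y x) cs"
    by (rule successively_mono) (use assms(1) in \<open>blast dest: sympD\<close>)
  then show ?thesis using assms(2) unfolding is_path_in_def by simp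
qed

lemma longest_path_exists:
  assumes "finite N" "a \<in> N"
  obtains cs where "is_path_in E N cs" "cs \<noteq> []" "\<And>ds. is_path_in E N ds \<Longrightarrow> length ds \<le> length cs"
proof -
  have single: "is_path_in E N [a]" using assms(2) by (simp add: is_path_in_def)
  have "\<forall>ds. is_path_in E N ds \<longrightarrow> length ds < Suc (card N)"
    using assms(1) unfolding is_path_in_def by (metis card_mono distinct_card less_Suc_eq_le)
  then obtain cs where cs: "is_path_in E N cs" "\<And>ds. is_path_in E N ds \<Longrightarrow> length ds \<le> length cs"
    using Lattices_Big.ex_has_greatest_nat[of "is_path_in E N" "[a]" length "Suc (card N)", OF single]
    by blast
  have "cs \<noteq> []" using cs(2)[OF single] by auto
  show thesis by (rule that[OF cs(1) \<open>cs \<noteq> []\<close> cs(2)])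
qed

lemma longest_path_hd_leaf:
  assumes "symp E" "irreflp E" "\<not> has_cycle_in E N"
    and cs: "is_path_in E N cs" "cs \<noteq> []" "\<And>ds. is_path_in E N ds \<Longrightarrow> length ds \<le> length cs"
    and w: "w \<in> N" "E (hd cs) w"
  shows "2 \<le> length cs \<and> w = cs ! 1"
proof (cases "w \<in> set cs")
  case False
  then have "is_path_in E N (w # cs)"
    using cs(1,2) w assms(1) by (auto simp: is_path_in_def successively_Cons dest: sympD)
  then show ?thesis using cs(3) by fastforce
next
  case True
  then obtain i where i: "i < length cs" "w = cs ! i" by (auto simp: in_set_conv_nth)
  have "i \<noteq> 0" using i w(2) cs(2) assms(2) by (metis hd_conv_nth irreflpD)
  moreover have "\<not> 2 \<le> i"
  proof
    assume "2 \<le> i"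
    let ?cyc = "take (Suc i) cs"
    have "successively E ?cyc"
      using cs(1) unfolding is_path_in_def by (metis append_take_drop_id successively_append_iff)
    moreover have "last ?cyc = w" "hd ?cyc = hd cs"
      using i cs(2) by (auto simp: last_conv_nth)
    ultimately have "is_cycle E ?cyc"
      using \<open>2 \<le> i\<close> i cs(1) w(2) assms(1) by (auto simp: is_cycle_def is_path_in_def dest: sympD)
    moreover have "set ?cyc \<subseteq> N" using cs(1) set_take_subset unfolding is_path_in_def by fast
    ultimately show False using assms(3) unfolding has_cycle_in_iff by blast
  qed
  ultimately have "i = 1" by simp
  then show ?thesis using i by simp
qed

lemma forest_has_leaf_outside:
  assumes "symp E" "irreflp E" "finite N" "\<not> has_cycle_in E N" "N \<noteq> {}"
    and no_isolated: "\<And>x. x \<in> N \<Longrightarrow> \<exists>y\<in>N. E x y"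
    and U: "\<And>a b. a \<in> U \<Longrightarrow> b \<in> U \<Longrightarrow> same_comp E N a b \<Longrightarrow> a = b"
  shows "\<exists>x\<in>N. x \<notin> U \<and> (\<exists>y. \<forall>w\<in>N. E x w \<longrightarrow> w = y)"
proof -
  obtain a where "a \<in> N" using assms(5) by blast
  then obtain cs where cs: "is_path_in E N cs" "cs \<noteq> []"
    "\<And>ds. is_path_in E N ds \<Longrightarrow> length ds \<le> length cs"
    using longest_path_exists[OF assms(3)] by blast
  have rcs: "is_path_in E N (rev cs)" "rev cs \<noteq> []"
    "\<And>ds. is_path_in E N ds \<Longrightarrow> length ds \<le> length (rev cs)"
    using cs is_path_in_rev[OF assms(1)] by auto
  have ends: "hd cs \<in> N" "last cs \<in> N" using cs(1,2) unfolding is_path_in_def by auto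
  then obtain w where "w \<in> N" "E (hd cs) w" using no_isolated by blast
  then have "2 \<le> length cs" using longest_path_hd_leaf[OF assms(1,2,4) cs] by blast
  then have "hd cs \<noteq> last cs" using cs(1) distinct_hd_neq_last unfolding is_path_in_def by blast
  then have "hd cs \<notin> U \<or> last cs \<notin> U"
    using U is_path_in_same_comp[OF cs(1,2)] by blast
  moreover have "w = cs ! 1" if "w \<in> N" "E (hd cs) w" for w
    using longest_path_hd_leaf[OF assms(1,2,4) cs that] by blast
  moreover have "w = rev cs ! 1" if "w \<in> N" "E (last cs) w" for w
    using longest_path_hd_leaf[OF assms(1,2,4) rcs] that cs(2) by (simp add: hd_rev)
  ultimately show ?thesis using ends by blast
qed

definition is_perfect_matching :: "('a \<Rightarrow> 'a \<Rightarrow> bool) \<Rightarrow> 'a set \<Rightarrow> 'a set set \<Rightarrow> bool" where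
  "is_perfect_matching E N M \<longleftrightarrow> (\<forall>e\<in>M. \<exists>u v. e = {u, v} \<and> u \<in> N \<and> v \<in> N \<and> E u v)
     \<and> (\<forall>e\<in>M. \<forall>e'\<in>M. e \<noteq> e' \<longrightarrow> e \<inter> e' = {}) \<and> \<Union>M = N"

lemma has_perfect_matching_iff: "has_perfect_matching E N \<longleftrightarrow> (\<exists>M. is_perfect_matching E N M)"
  unfolding has_perfect_matching_def is_perfect_matching_def ..

lemma is_perfect_matchingD:
  assumes "is_perfect_matching E N M"
  shows "e \<in> M \<Longrightarrow> \<exists>u v. e = {u, v} \<and> u \<in> N \<and> v \<in> N \<and> E u v"
    and "e \<in> M \<Longrightarrow> e' \<in> M \<Longrightarrow> e \<noteq> e' \<Longrightarrow> e \<inter> e' = {}"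
    and "\<Union>M = N"
  using assms unfolding is_perfect_matching_def by blast+

lemma is_perfect_matching_edge:
  assumes "symp E" and M: "is_perfect_matching E N M" and "x \<in> N"
  obtains y where "y \<in> N" "E x y" "{x, y} \<in> M"
proof -
  have "x \<in> \<Union>M" using is_perfect_matchingD(3)[OF M] assms(3) by simp
  then obtain e where e: "e \<in> M" "x \<in> e" by blast
  then obtain u v where uv: "e = {u, v}" "u \<in> N" "v \<in> N" "E u v"
    using is_perfect_matchingD(1)[OF M] by blast
  show thesis
  proof (cases "x = u")
    case True
    then show thesis using that uv e by blast
  next
    case False
    then have "x = v" "E x u" using uv e(2) assms(1) by (auto dest: sympD)
    then show thesis using that[of u] uv e by (simp add: insert_commute)
  qed
qed

lemma is_perfect_matching_Diff_edge:
  assumes M: "is_perfect_matching E N M" and e0: "e0 \<in> M"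
  shows "is_perfect_matching E (N - e0) (M - {e0})"
  unfolding is_perfect_matching_def
proof (intro conjI ballI impI)
  have apart: "e \<inter> e0 = {}" if "e \<in> M - {e0}" for e
    using is_perfect_matchingD(2)[OF M _ e0] that by blast
  fix e assume e: "e \<in> M - {e0}"
  obtain u v where "e = {u, v}" "u \<in> N" "v \<in> N" "E u v"
    using is_perfect_matchingD(1)[OF M] e by blast
  with apart[OF e] show "\<exists>u v. e = {u, v} \<and> u \<in> N - e0 \<and> v \<in> N - e0 \<and> E u v" by blast
next
  fix e e' assume "e \<in> M - {e0}" "e' \<in> M - {e0}" "e \<noteq> e'"
  then show "e \<inter> e' = {}" using is_perfect_matchingD(2)[OF M] by blast
next
  have "e \<inter> e0 = {}" if "e \<in> M - {e0}" for e
    using is_perfect_matchingD(2)[OF M _ e0] that by blast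
  then show "\<Union>(M - {e0}) = N - e0"
    using e0 unfolding is_perfect_matchingD(3)[OF M, symmetric] by blast
qed

lemma is_perfect_matching_insert_edge:
  assumes M: "is_perfect_matching E N M" and "v \<notin> N" "w \<notin> N" "E v w"
  shows "is_perfect_matching E (insert v (insert w N)) (insert {v, w} M)"
  unfolding is_perfect_matching_def
proof (intro conjI ballI impI)
  fix e assume "e \<in> insert {v, w} M"
  then consider "e = {v, w}" | "e \<in> M" by blast
  then show "\<exists>a b. e = {a, b} \<and> a \<in> insert v (insert w N) \<and> b \<in> insert v (insert w N) \<and> E a b"
  proof cases
    case 1
    then show ?thesis using assms(4) by blast
  next
    case 2
    then obtain a b where "e = {a, b}" "a \<in> N" "b \<in> N" "E a b"
      using is_perfect_matchingD(1)[OF M] by blast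
    then show ?thesis by blast
  qed
next
  have apart: "e \<inter> {v, w} = {}" if "e \<in> M" for e
    using that is_perfect_matchingD(3)[OF M] assms(2,3) by blast
  fix e e' assume "e \<in> insert {v, w} M" "e' \<in> insert {v, w} M" "e \<noteq> e'"
  then show "e \<inter> e' = {}"
    using is_perfect_matchingD(2)[OF M] apart by (auto simp: Int_commute)
next
  show "\<Union>(insert {v, w} M) = insert v (insert w N)"
    using is_perfect_matchingD(3)[OF M] by simp
qed

lemma has_perfect_matching_neighbour:
  assumes "symp E" "has_perfect_matching E N" "x \<in> N"
  shows "\<exists>y\<in>N. E x y"
proof -
  obtain M where "is_perfect_matching E N M"
    using assms(2) unfolding has_perfect_matching_iff by blast
  from is_perfect_matching_edge[OF assms(1) this assms(3)] show ?thesis by blast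
qed

lemma has_perfect_matching_remove_leaf:
  assumes "symp E" "has_perfect_matching E N" "x \<in> N" and leaf: "\<And>w. w \<in> N \<Longrightarrow> E x w \<Longrightarrow> w = y"
  shows "y \<in> N" "E x y" "has_perfect_matching E (N - {x, y})"
proof -
  obtain M where M: "is_perfect_matching E N M"
    using assms(2) unfolding has_perfect_matching_iff by blast
  obtain z where z: "z \<in> N" "E x z" "{x, z} \<in> M"
    using is_perfect_matching_edge[OF assms(1) M assms(3)] by blast
  moreover have "z = y" using leaf z by blast
  ultimately have y: "y \<in> N" "E x y" "{x, y} \<in> M" by simp_all
  then show "y \<in> N" "E x y" by simp_all
  show "has_perfect_matching E (N - {x, y})"
    using is_perfect_matching_Diff_edge[OF M y(3)] unfolding has_perfect_matching_iff by blast
qed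

lemma has_perfect_matching_insert_edge:
  assumes "has_perfect_matching E N" "v \<notin> N" "w \<notin> N" "E v w"
  shows "has_perfect_matching E (insert v (insert w N))"
proof -
  obtain M where "is_perfect_matching E N M"
    using assms(1) unfolding has_perfect_matching_iff by blast
  from is_perfect_matching_insert_edge[OF this assms(2-)] show ?thesis
    unfolding has_perfect_matching_iff by blast
qed

lemma independent_mono: "independent N E I \<Longrightarrow> N \<subseteq> V \<Longrightarrow> independent V E I"
  unfolding independent_def by blast

lemma independent_insert:
  assumes "symp E" "irreflp E" "independent V E I" "v \<in> V" "\<And>a. a \<in> I \<Longrightarrow> \<not> E v a"
  shows "independent V E (insert v I)"
  using assms unfolding independent_def by (blast dest: sympD irreflpD)

lemma forest_matching_independent_half:
  assumes "symp E" "irreflp E"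
  shows "finite N \<Longrightarrow> \<not> has_cycle_in E N \<Longrightarrow> has_perfect_matching E N
    \<Longrightarrow> (\<And>a b. a \<in> U \<Longrightarrow> b \<in> U \<Longrightarrow> same_comp E N a b \<Longrightarrow> a = b)
    \<Longrightarrow> \<exists>I. independent N E I \<and> I \<inter> U = {} \<and> 2 * card I = card N"
proof (induction "card N" arbitrary: N rule: less_induct)
  case less
  show ?case
  proof (cases "N = {}")
    case True
    then show ?thesis unfolding independent_def by auto
  next
    case False
    obtain x y where x: "x \<in> N" "x \<notin> U" and leaf: "\<forall>w\<in>N. E x w \<longrightarrow> w = y"
      using forest_has_leaf_outside[OF assms less.prems(1,2) False
          has_perfect_matching_neighbour[OF assms(1) less.prems(3)] less.prems(4)] by blast
    have y: "y \<in> N" "E x y" and pm: "has_perfect_matching E (N - {x, y})"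
      using has_perfect_matching_remove_leaf[OF assms(1) less.prems(3) x(1) leaf[rule_format]] by blast+
    have sub: "N - {x, y} \<subseteq> N" by blast
    have "card (N - {x, y}) < card N"
      using x(1) less.prems(1) by (intro psubset_card_mono) auto
    moreover have "finite (N - {x, y})" using less.prems(1) by blast
    moreover have "\<not> has_cycle_in E (N - {x, y})"
      using less.prems(2) has_cycle_in_mono[OF sub] by blast
    moreover have "a = b" if "a \<in> U" "b \<in> U" "same_comp E (N - {x, y}) a b" for a b
      using less.prems(4)[OF that(1,2) same_comp_mono[OF sub that(3)]] .
    ultimately have "\<exists>I. independent (N - {x, y}) E I \<and> I \<inter> U = {} \<and> 2 * card I = card (N - {x, y})"
      by (rule less.hyps[OF _ _ _ pm])
    then obtain I where I: "independent (N - {x, y}) E I" "I \<inter> U = {}" "2 * card I = card (N - {x, y})"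
      by blast
    have I_sub: "I \<subseteq> N - {x, y}" using I(1) unfolding independent_def by blast
    have "independent N E (insert x I)"
      using independent_insert[OF assms independent_mono[OF I(1) sub] x(1)] I_sub leaf by blast
    moreover have "2 * card (insert x I) = card N"
    proof -
      have "x \<noteq> y" using y(2) assms(2) by (auto dest: irreflpD)
      then have "card (N - {x, y}) = card N - 2" "2 \<le> card N"
        using x(1) y(1) card_Diff_subset[of "{x, y}" N] card_mono[OF less.prems(1), of "{x, y}"]
        by auto
      moreover have "finite I" "x \<notin> I" using I_sub less.prems(1) finite_subset by blast+
      ultimately show ?thesis using I(3) by simp
    qed
    ultimately show ?thesis using I(2) x(2) by blast
  qed
qed

lemma not_has_cycle_in_insert:
  assumes "symp E" "\<not> has_cycle_in E K" "v \<notin> K"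
    and sep: "\<And>a b. a \<in> K \<Longrightarrow> b \<in> K \<Longrightarrow> E v a \<Longrightarrow> E v b \<Longrightarrow> same_comp E K a b \<Longrightarrow> a = b"
  shows "\<not> has_cycle_in E (insert v K)"
proof
  assume "has_cycle_in E (insert v K)"
  then obtain cs where cs: "is_cycle E cs" "set cs \<subseteq> insert v K"
    unfolding has_cycle_in_iff by blast
  have "v \<in> set cs" using assms(2) cs unfolding has_cycle_in_iff by blast
  then obtain j where j: "j < length cs" "cs ! j = v" by (auto simp: in_set_conv_nth)
  \<comment> \<open>Rotated to start at v, the rest of the cycle is a path in K joining two neighbours of v.\<close>
  have rot: "is_cycle E (rotate j cs)" "set (rotate j cs) \<subseteq> insert v K" "hd (rotate j cs) = v"
  proof -
    have "cs \<noteq> []" using j(1) by auto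
    then show "is_cycle E (rotate j cs)" "set (rotate j cs) \<subseteq> insert v K" "hd (rotate j cs) = v"
      using is_cycle_rotate[OF cs(1)] cs(2) j hd_rotate_conv_nth[of cs j] by auto
  qed
  then obtain ws where ws: "rotate j cs = v # ws"
    by (cases "rotate j cs") (auto simp: is_cycle_def)
  have ws_facts: "2 \<le> length ws" "v \<notin> set ws" "distinct ws" "successively E ws"
    "E (last ws) v" "E v (hd ws)"
    using rot(1) unfolding ws is_cycle_def by (auto simp: successively_Cons split: if_splits)
  have path: "is_path_in E K ws" "ws \<noteq> []"
    using ws_facts rot(2) unfolding ws is_path_in_def by auto
  have "E v (last ws)" using ws_facts(5) assms(1) by (blast dest: sympD)
  moreover have "hd ws \<noteq> last ws" using ws_facts distinct_hd_neq_last by blast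
  moreover have "hd ws \<in> K" "last ws \<in> K" using path unfolding is_path_in_def by auto
  ultimately show False using sep ws_facts(6) is_path_in_same_comp[OF path] by blast
qed

lemma finite_indep_cards:
  assumes "fin_graph V E"
  shows "finite {card S | S. independent V E S}"
proof -
  have "{card S | S. independent V E S} \<subseteq> card ` Pow V"
    unfolding independent_def by auto
  then show ?thesis using fin_graph_finite[OF assms] finite_subset by blast
qed

lemma card_le_indep_number:
  assumes "fin_graph V E" "independent V E S"
  shows "card S \<le> indep_number V E"
  unfolding indep_number_def using finite_indep_cards[OF assms(1)] assms(2) by (intro Max_ge) auto

lemma indep_number_attained:
  assumes "fin_graph V E"
  obtains S where "independent V E S" "card S = indep_number V E"
proof -
  have "independent V E {}" unfolding independent_def by simp
  then have "indep_number V E \<in> {card S | S. independent V E S}"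
    unfolding indep_number_def using finite_indep_cards[OF assms] by (intro Max_in) auto
  then obtain S where "indep_number V E = card S" "independent V E S" by blast
  then show thesis using that by simp
qed

lemma card_isolated_in_nonisolated_in:
  assumes "finite K"
  shows "card (isolated_in E K) + card (nonisolated_in E K) = card K"
proof -
  have "isolated_in E K \<union> nonisolated_in E K = K" "isolated_in E K \<inter> nonisolated_in E K = {}"
    unfolding isolated_in_def nonisolated_in_def by auto
  moreover have "finite (isolated_in E K)" "finite (nonisolated_in E K)"
    using assms unfolding isolated_in_def nonisolated_in_def by auto
  ultimately show ?thesis by (metis card_Un_disjoint)
qed

definition ext_indep_candidate :: "'a set \<Rightarrow> ('a \<Rightarrow> 'a \<Rightarrow> bool) \<Rightarrow> nat \<Rightarrow> nat \<Rightarrow> 'a set \<Rightarrow> bool" where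
  "ext_indep_candidate V E k r K \<longleftrightarrow> K \<subseteq> V \<and> r \<le> k \<and> card K = k + r \<and> \<not> has_cycle_in E K
     \<and> card (nonisolated_in E K) = 2 * r \<and> has_perfect_matching E (nonisolated_in E K)"

definition ext_dominated :: "('a \<Rightarrow> 'a \<Rightarrow> bool) \<Rightarrow> 'a set \<Rightarrow> 'a \<Rightarrow> bool" where
  "ext_dominated E K v \<longleftrightarrow>
     (\<exists>a b. a \<noteq> b \<and> a \<in> nbhd E v \<inter> isolated_in E K \<and> b \<in> nbhd E v \<inter> isolated_in E K)
   \<or> (\<exists>a b. a \<noteq> b \<and> a \<in> nbhd E v \<inter> K \<and> b \<in> nbhd E v \<inter> K \<and> same_comp E K a b)"

lemma ext_indep_set_iff:
  "ext_indep_set V E k K \<longleftrightarrow>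
     (\<exists>r. ext_indep_candidate V E k r K) \<and> (\<forall>v\<in>V - K. ext_dominated E K v)"
  unfolding ext_indep_set_def ext_indep_candidate_def ext_dominated_def[symmetric] by blast

lemma not_ext_dominatedD:
  assumes "\<not> ext_dominated E K v"
  shows "\<And>a b. a \<in> isolated_in E K \<Longrightarrow> b \<in> isolated_in E K \<Longrightarrow> E v a \<Longrightarrow> E v b \<Longrightarrow> a = b"
    and "\<And>a b. a \<in> K \<Longrightarrow> b \<in> K \<Longrightarrow> E v a \<Longrightarrow> E v b \<Longrightarrow> same_comp E K a b \<Longrightarrow> a = b"
  using assms unfolding ext_dominated_def nbhd_def by blast+

lemma ext_indep_candidate_card_isolated_in:
  assumes "fin_graph V E" "ext_indep_candidate V E k r K"
  shows "card (isolated_in E K) + r = k"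
proof -
  have "finite K"
    using assms(2) finite_subset fin_graph_finite[OF assms(1)] unfolding ext_indep_candidate_def by blast
  then show ?thesis
    using card_isolated_in_nonisolated_in[of K E] assms(2) unfolding ext_indep_candidate_def by simp
qed

lemma independent_ext_indep_candidate:
  assumes "independent V E S"
  shows "ext_indep_candidate V E (card S) 0 S"
proof -
  have no_edge: "\<not> E a b" if "a \<in> S" "b \<in> S" for a b
    using assms that unfolding independent_def by blast
  then have "nonisolated_in E S = {}" unfolding nonisolated_in_def by blast
  moreover have "\<not> has_cycle_in E S"
  proof
    assume "has_cycle_in E S"
    then obtain cs where cs: "is_cycle E cs" "set cs \<subseteq> S" unfolding has_cycle_in_iff by blast
    then have "1 < length cs" "successively E cs" unfolding is_cycle_def by simp_all
    then have "cs ! 0 \<in> set cs" "cs ! 1 \<in> set cs" "E (cs ! 0) (cs ! 1)"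
      using successively_nth[of E cs 0] by (auto intro!: nth_mem)
    then have "E (cs ! 0) (cs ! 1)" "cs ! 0 \<in> S" "cs ! 1 \<in> S" using cs(2) by auto
    then show False using no_edge by blast
  qed
  moreover have "has_perfect_matching E {}"
    unfolding has_perfect_matching_def by simp
  ultimately show ?thesis
    using assms unfolding ext_indep_candidate_def independent_def by simp
qed

lemma independent_isolated_in_Un:
  assumes "symp E" "independent K E J"
  shows "independent K E (isolated_in E K \<union> J)"
  using assms unfolding independent_def isolated_in_def by (blast dest: sympD)

lemma ext_indep_candidate_independent:
  assumes G: "fin_graph V E" and K: "ext_indep_candidate V E k r K"
    and U_iso: "U \<inter> isolated_in E K = {}"
    and U: "\<And>a b. a \<in> U \<Longrightarrow> b \<in> U \<Longrightarrow> same_comp E K a b \<Longrightarrow> a = b"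
  obtains I where "independent V E I" "card I = k" "I \<subseteq> K" "I \<inter> U = {}"
proof -
  let ?N = "nonisolated_in E K"
  have KV: "K \<subseteq> V" and acyc: "\<not> has_cycle_in E K" and pm: "has_perfect_matching E ?N"
    and card_N: "card ?N = 2 * r"
    using K unfolding ext_indep_candidate_def by blast+
  have NK: "?N \<subseteq> K" unfolding nonisolated_in_def by blast
  have fin_K: "finite K" using finite_subset[OF KV fin_graph_finite[OF G]] .
  have "finite ?N" using finite_subset[OF NK fin_K] .
  moreover have "\<not> has_cycle_in E ?N" using acyc has_cycle_in_mono[OF NK] by blast
  moreover have "a = b" if "a \<in> U" "b \<in> U" "same_comp E ?N a b" for a b
    using U[OF that(1,2) same_comp_mono[OF NK that(3)]] .
  ultimately have "\<exists>J. independent ?N E J \<and> J \<inter> U = {} \<and> 2 * card J = card ?N"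
    by (rule forest_matching_independent_half[OF fin_graph_symp[OF G] fin_graph_irreflp[OF G] _ _ pm])
  then obtain J where J: "independent ?N E J" "J \<inter> U = {}" "card J = r"
    using card_N by auto
  have J_sub: "J \<subseteq> ?N" using J(1) unfolding independent_def by blast
  let ?I = "isolated_in E K \<union> J"
  have "independent V E ?I"
    using independent_isolated_in_Un[OF fin_graph_symp[OF G] independent_mono[OF J(1) NK]]
      independent_mono KV by blast
  moreover have "card ?I = k"
  proof -
    have "finite (isolated_in E K)" "finite J"
      using fin_K finite_subset[OF J_sub \<open>finite ?N\<close>] unfolding isolated_in_def by auto
    moreover have "isolated_in E K \<inter> J = {}"
      using J_sub unfolding isolated_in_def nonisolated_in_def by blast
    ultimately have "card ?I = card (isolated_in E K) + card J" by (rule card_Un_disjoint)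
    then show ?thesis using ext_indep_candidate_card_isolated_in[OF G K] J(3) by simp
  qed
  moreover have "?I \<subseteq> K" "?I \<inter> U = {}"
    using J_sub J(2) NK U_iso unfolding isolated_in_def by blast+
  ultimately show thesis using that by blast
qed

lemma ext_indep_candidate_le_indep_number:
  assumes "fin_graph V E" "ext_indep_candidate V E k r K"
  shows "k \<le> indep_number V E"
proof -
  obtain I where "independent V E I" "card I = k"
    using ext_indep_candidate_independent[OF assms, of "{}"] by auto
  then show ?thesis using card_le_indep_number[OF assms(1)] by blast
qed

lemma nonisolated_in_insert:
  assumes "symp E" "v \<notin> K" "w \<in> isolated_in E K" "E v w"
    and only_w: "\<And>a. a \<in> isolated_in E K \<Longrightarrow> E v a \<Longrightarrow> a = w"
  shows "nonisolated_in E (insert v K) = insert v (insert w (nonisolated_in E K))"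
proof (intro set_eqI iffI)
  fix x assume "x \<in> nonisolated_in E (insert v K)"
  then obtain u where x: "x \<in> insert v K" "u \<in> insert v K" "E x u"
    unfolding nonisolated_in_def by blast
  show "x \<in> insert v (insert w (nonisolated_in E K))"
  proof (cases "x = v")
    case False
    then have "x \<in> K" using x(1) by blast
    moreover have "x = w" if "x \<in> isolated_in E K"
    proof -
      have "u = v" using that x(2,3) unfolding isolated_in_def by blast
      then show "x = w" using only_w[OF that] x(3) assms(1) by (blast dest: sympD)
    qed
    ultimately show ?thesis unfolding isolated_in_def nonisolated_in_def by blast
  qed simp
next
  fix x assume x: "x \<in> insert v (insert w (nonisolated_in E K))"
  have "w \<in> K" "E w v" using assms(1,3,4) unfolding isolated_in_def by (auto dest: sympD)
  then show "x \<in> nonisolated_in E (insert v K)"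
    using x assms(4) unfolding nonisolated_in_def by blast
qed

lemma ext_indep_candidate_insert:
  assumes G: "fin_graph V E" and K: "ext_indep_candidate V E k r K" and v: "v \<in> V - K"
    and w: "w \<in> isolated_in E K" "E v w"
    and only_w: "\<And>a. a \<in> isolated_in E K \<Longrightarrow> E v a \<Longrightarrow> a = w"
    and sep: "\<And>a b. a \<in> K \<Longrightarrow> b \<in> K \<Longrightarrow> E v a \<Longrightarrow> E v b \<Longrightarrow> same_comp E K a b \<Longrightarrow> a = b"
  shows "ext_indep_candidate V E k (Suc r) (insert v K)"
proof -
  let ?N = "nonisolated_in E K"
  have KV: "K \<subseteq> V" and card_K: "card K = k + r" and acyc: "\<not> has_cycle_in E K"
    and card_N: "card ?N = 2 * r" and pm: "has_perfect_matching E ?N"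
    using K unfolding ext_indep_candidate_def by blast+
  have fin_K: "finite K" using finite_subset[OF KV fin_graph_finite[OF G]] .
  have "w \<in> K" "v \<notin> K" using w(1) v unfolding isolated_in_def by blast+
  have N': "nonisolated_in E (insert v K) = insert v (insert w ?N)"
    using nonisolated_in_insert[OF fin_graph_symp[OF G] \<open>v \<notin> K\<close> w only_w] .
  have "v \<notin> ?N" "w \<notin> ?N" "v \<noteq> w"
    using \<open>v \<notin> K\<close> \<open>w \<in> K\<close> w(1) unfolding isolated_in_def nonisolated_in_def by blast+
  have "card (isolated_in E K) \<noteq> 0"
    using w(1) fin_K unfolding isolated_in_def by auto
  then have "Suc r \<le> k" using ext_indep_candidate_card_isolated_in[OF G K] by simp
  moreover have "card (insert v K) = k + Suc r" using fin_K \<open>v \<notin> K\<close> card_K by simp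
  moreover have "\<not> has_cycle_in E (insert v K)"
    using not_has_cycle_in_insert[OF fin_graph_symp[OF G] acyc \<open>v \<notin> K\<close> sep] .
  moreover have "card (nonisolated_in E (insert v K)) = 2 * Suc r"
    unfolding N' using finite_subset[OF _ fin_K, of ?N] \<open>v \<notin> ?N\<close> \<open>w \<notin> ?N\<close> \<open>v \<noteq> w\<close> card_N
    unfolding nonisolated_in_def by simp
  moreover have "has_perfect_matching E (nonisolated_in E (insert v K))"
    unfolding N' using has_perfect_matching_insert_edge[OF pm \<open>v \<notin> ?N\<close> \<open>w \<notin> ?N\<close> w(2)] .
  ultimately show ?thesis
    using KV v unfolding ext_indep_candidate_def by blast
qed

lemma ext_indep_candidate_undominated_lt_indep_number:
  assumes G: "fin_graph V E" and K: "ext_indep_candidate V E k r K" and v: "v \<in> V - K"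
    and no_iso: "\<And>a. a \<in> isolated_in E K \<Longrightarrow> \<not> E v a"
    and sep: "\<And>a b. a \<in> K \<Longrightarrow> b \<in> K \<Longrightarrow> E v a \<Longrightarrow> E v b \<Longrightarrow> same_comp E K a b \<Longrightarrow> a = b"
  shows "k < indep_number V E"
proof -
  have U_iso: "nbhd E v \<inter> isolated_in E K = {}" using no_iso unfolding nbhd_def by blast
  have U_sep: "a = b" if "a \<in> nbhd E v" "b \<in> nbhd E v" "same_comp E K a b" for a b
    using sep[of a b] that unfolding nbhd_def same_comp_def by blast
  obtain I where I: "independent V E I" "card I = k" "I \<subseteq> K" "I \<inter> nbhd E v = {}"
    using ext_indep_candidate_independent[OF G K U_iso U_sep] by blast
  have "independent V E (insert v I)"
    using independent_insert[OF fin_graph_symp[OF G] fin_graph_irreflp[OF G] I(1)] v I(4)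
    unfolding nbhd_def by blast
  moreover have "card (insert v I) = Suc k"
  proof -
    have "finite I" using I(1) fin_graph_finite[OF G] finite_subset unfolding independent_def by blast
    moreover have "v \<notin> I" using I(3) v by blast
    ultimately show ?thesis using I(2) by simp
  qed
  ultimately have "Suc k \<le> indep_number V E" using card_le_indep_number[OF G] by metis
  then show ?thesis by simp
qed

lemma ex_ext_indep_set_indep_number:
  assumes G: "fin_graph V E"
  shows "\<exists>K. ext_indep_set V E (indep_number V E) K"
proof -
  let ?\<alpha> = "indep_number V E"
  let ?P = "\<lambda>r. \<exists>K. ext_indep_candidate V E ?\<alpha> r K"
  obtain S where "independent V E S" "card S = ?\<alpha>" by (rule indep_number_attained[OF G])
  then have "?P 0" using independent_ext_indep_candidate by metis
  moreover have "\<forall>r. ?P r \<longrightarrow> r \<le> ?\<alpha>" unfolding ext_indep_candidate_def by blast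
  ultimately obtain r K where K: "ext_indep_candidate V E ?\<alpha> r K" and r_max: "\<forall>r'. ?P r' \<longrightarrow> r' \<le> r"
    using Nat.ex_has_greatest_nat[of ?P 0 ?\<alpha>] by blast
  have "ext_dominated E K v" if v: "v \<in> V - K" for v
  proof (rule ccontr)
    assume undominated: "\<not> ext_dominated E K v"
    note sep = not_ext_dominatedD(2)[OF undominated]
    show False
    proof (cases "\<exists>w\<in>isolated_in E K. E v w")
      case True
      then obtain w where w: "w \<in> isolated_in E K" "E v w" by blast
      have "a = w" if "a \<in> isolated_in E K" "E v a" for a
        using not_ext_dominatedD(1)[OF undominated that(1) w(1) that(2) w(2)] .
      then have "ext_indep_candidate V E ?\<alpha> (Suc r) (insert v K)"
        using ext_indep_candidate_insert[OF G K v w _ sep] by blast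
      then have "Suc r \<le> r" using r_max by blast
      then show False by simp
    next
      case False
      then have "?\<alpha> < ?\<alpha>"
        using ext_indep_candidate_undominated_lt_indep_number[OF G K v _ sep] by blast
      then show False by simp
    qed
  qed
  then show ?thesis using K unfolding ext_indep_set_iff by blast
qed

theorem lemma1p1:
  fixes V :: "'a set" and E :: "'a \<Rightarrow> 'a \<Rightarrow> bool" and k :: nat
  assumes "fin_graph V E"
  shows "indep_number V E = k \<longleftrightarrow>
           ((\<exists>K. ext_indep_set V E k K) \<and> (\<forall>k'. k' > k \<longrightarrow> \<not> (\<exists>K. ext_indep_set V E k' K)))"
proof -
  have le: "k' \<le> indep_number V E" if "ext_indep_set V E k' K" for k' K
    using that ext_indep_candidate_le_indep_number[OF assms] unfolding ext_indep_set_iff by blast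
  have "\<exists>K. ext_indep_set V E (indep_number V E) K"
    by (rule ex_ext_indep_set_indep_number[OF assms])
  then show ?thesis using le by (meson le_antisym not_le)
qed

end
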